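(* Let $\beta\colon[0,\infty)\to(0,1)$ be continuous and let $D$ be the multistable subordinator with index $\beta$ (defined in the context). Then the sample paths of $D$ are almost surely strictly increasing.
   Context: Let $\beta\colon[0,\infty)\to(0,1)$ be a continuous function. Let $\Pi=\{(t_i,x_i)\}$ be a Poisson point process on $[0,\infty)\times(0,\infty)$ with intensity measure $\nu(dt,dx)=\beta(t)x^{-\beta(t)-1}\,dt\,dx$. The multistable subordinator with index $\beta$ is the process $D(t)=\sum_{(t_i,x_i)\in\Pi,\ t_i\le t}x_i$, $t\ge0$ (this sum is a.s. finite since $\int_0^t(1-\beta(s))^{-1}ds<\infty$). *)

theory Defs
  imports "HOL-Probability.Probability"
begin

definition point_count :: "('w \<Rightarrow> (real \<times> real) set) \<Rightarrow> (real \<times> real) set \<Rightarrow> 'w \<Rightarrow> ennreal" where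
  "point_count P A \<omega> = emeasure (count_space UNIV) (P \<omega> \<inter> A)"

definition poisson_point_process ::
  "'w measure \<Rightarrow> (real \<times> real) measure \<Rightarrow> ('w \<Rightarrow> (real \<times> real) set) \<Rightarrow> bool" where
  "poisson_point_process M \<nu> P \<longleftrightarrow>
     prob_space M \<and> sets \<nu> = sets lborel \<and>
     (\<forall>A\<in>sets lborel. point_count P A \<in> borel_measurable M) \<and>
     (\<forall>A\<in>sets lborel. emeasure \<nu> A < \<infinity> \<longrightarrow>
        (\<forall>k::nat. measure M {\<omega>\<in>space M. point_count P A \<omega> = of_nat k}
                 = exp (- measure \<nu> A) * measure \<nu> A ^ k / fact k)) \<and>
     (\<forall>A\<in>sets lborel. emeasure \<nu> A = \<infinity> \<longrightarrow>
        (AE \<omega> in M. point_count P A \<omega> = \<infinity>)) \<and>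
     (\<forall>(I::nat set) A. finite I \<longrightarrow> A ` I \<subseteq> sets lborel \<longrightarrow> disjoint_family_on A I \<longrightarrow>
        prob_space.indep_vars M (\<lambda>_. borel) (\<lambda>i. point_count P (A i)) I)"

definition multistable_intensity :: "(real \<Rightarrow> real) \<Rightarrow> (real \<times> real) measure" where
  "multistable_intensity \<beta> = density lborel
     (\<lambda>(t, x). if 0 \<le> t \<and> 0 < x then ennreal (\<beta> t * x powr (- \<beta> t - 1)) else 0)"

definition multistable_subordinator ::
  "('w \<Rightarrow> (real \<times> real) set) \<Rightarrow> real \<Rightarrow> 'w \<Rightarrow> ennreal" where
  "multistable_subordinator P t \<omega> = (\<Sum>\<^sub>\<infinity> p\<in>{p\<in>P \<omega>. fst p \<le> t}. ennreal (snd p))"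

end

theory Submission
  imports Defs
begin

text \<open>Because x^(-\<beta>-1) is not integrable at 0, the intensity has infinite mass above every
  time interval, so almost surely \<Pi> has a point above every interval with rational endpoints: D
  jumps in every interval. Strict monotonicity then only needs D(T) < \<infinity> almost surely. Up to
  time T there are almost surely finitely many jumps larger than 1, as x^(-\<beta>-1) is integrable
  at \<infinity>. A jump in the dyadic shell (2^(-k-1), 2^(-k)] is at most 2^(-k), and the expected number
  of such jumps is O(2^(kb)), where b < 1 is the maximum of \<beta> on [0, T]; so the
  expected total size of the jumps below 1 is finite.\<close>

section \<open>Poisson counts\<close>

lemma poisson_probabilities_sums_one: "(\<lambda>k. exp (-l) * l^k / fact k) sums (1::real)"
proof -
  have "(\<lambda>k. l^k / fact k) sums exp l"
    using exp_converges[of l] by (simp add: divide_inverse mult.commute scaleR_conv_of_real)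
  from sums_mult[OF this, of "exp (-l)"] show ?thesis
    by (simp add: exp_minus field_simps)
qed

lemma poisson_mean_sums: "(\<lambda>k. real k * (exp (-l) * l^k / fact k)) sums (l::real)"
proof -
  have "real (Suc k) * (exp (-l) * l^Suc k / fact (Suc k)) = l * (exp (-l) * l^k / fact k)" for k
    by (simp del: of_nat_Suc add: field_simps)
  then have "(\<lambda>k. real (Suc k) * (exp (-l) * l^Suc k / fact (Suc k))) sums (l * 1)"
    using sums_mult[OF poisson_probabilities_sums_one] by presburger
  from sums_Suc[OF this[unfolded mult_1_right]] show ?thesis by simp
qed

lemma
  fixes N :: "'w \<Rightarrow> ennreal"
  assumes "prob_space M" and N_measurable[measurable]: "N \<in> borel_measurable M"
    and poisson: "\<And>k::nat. measure M {\<omega>\<in>space M. N \<omega> = of_nat k} = exp (-l) * l^k / fact k"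
  shows poisson_count_AE_nat: "AE \<omega> in M. \<exists>k::nat. N \<omega> = of_nat k"
    and nn_integral_poisson_count: "0 \<le> l \<Longrightarrow> (\<integral>\<^sup>+\<omega>. N \<omega> \<partial>M) = ennreal l"
proof -
  interpret prob_space M by fact
  define E where "E k = {\<omega>\<in>space M. N \<omega> = of_nat k}" for k :: nat
  have E_sets[measurable]: "E k \<in> sets M" for k
    unfolding E_def by measurable
  have "(\<lambda>k. prob (E k)) sums prob (\<Union>k. E k)"
    by (intro measure_UNION) (auto simp: disjoint_family_on_def E_def)
  then have "prob (\<Union>k. E k) = 1"
    using poisson sums_unique2[OF _ poisson_probabilities_sums_one] by (simp add: E_def)
  then have AE_E: "AE \<omega> in M. \<omega> \<in> (\<Union>k. E k)"
    by (rule AE_prob_1)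
  then show "AE \<omega> in M. \<exists>k::nat. N \<omega> = of_nat k"
    by eventually_elim (auto simp: E_def)
  assume "0 \<le> l"
  have "AE \<omega> in M. N \<omega> = (\<Sum>k. of_nat k * indicator (E k) \<omega>)"
    using AE_E
  proof eventually_elim
    case (elim \<omega>)
    then obtain k where "\<omega> \<in> E k" by blast
    then have "(\<lambda>j. of_nat j * indicator (E j) \<omega>) = (\<lambda>j. if j = k then of_nat j else 0 :: ennreal)"
      by (auto simp: E_def fun_eq_iff)
    with sums_single[of k "of_nat :: nat \<Rightarrow> ennreal"] \<open>\<omega> \<in> E k\<close> show ?case
      by (simp add: sums_iff E_def)
  qed
  then have "(\<integral>\<^sup>+\<omega>. N \<omega> \<partial>M) = (\<Sum>k. \<integral>\<^sup>+\<omega>. of_nat k * indicator (E k) \<omega> \<partial>M)"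
    by (simp add: nn_integral_cong_AE nn_integral_suminf)
  also have "\<dots> = (\<Sum>k. ennreal (real k) * ennreal (exp (-l) * l^k / fact k))"
    using poisson by (simp add: nn_integral_cmult_indicator emeasure_eq_measure E_def
        ennreal_of_nat_eq_real_of_nat)
  also have "\<dots> = (\<Sum>k. ennreal (real k * (exp (-l) * l^k / fact k)))"
    using \<open>0 \<le> l\<close> by (intro suminf_cong) (simp add: ennreal_mult[symmetric] del: times_divide_eq_right)
  also have "\<dots> = ennreal l"
    using poisson_mean_sums[of l] \<open>0 \<le> l\<close> by (subst suminf_ennreal2) (auto simp: sums_iff)
  finally show "(\<integral>\<^sup>+\<omega>. N \<omega> \<partial>M) = ennreal l" .
qed

section \<open>Poisson point processes\<close>

lemma point_count_eq_top_iff: "point_count P A \<omega> = \<top> \<longleftrightarrow> infinite (P \<omega> \<inter> A)"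
  by (simp add: point_count_def emeasure_count_space)

lemma point_count_eq_0_iff: "point_count P A \<omega> = 0 \<longleftrightarrow> P \<omega> \<inter> A = {}"
  by (simp add: point_count_def emeasure_count_space_eq_0)

context
  fixes M :: "'w measure" and \<nu> :: "(real \<times> real) measure" and P :: "'w \<Rightarrow> (real \<times> real) set"
  assumes ppp: "poisson_point_process M \<nu> P"
begin

lemma poisson_point_process_prob_space: "prob_space M"
  using ppp by (simp add: poisson_point_process_def)

lemma point_count_measurable: "A \<in> sets lborel \<Longrightarrow> point_count P A \<in> borel_measurable M"
  using ppp by (simp add: poisson_point_process_def)

lemma poisson_point_process_count_distribution:
  assumes "A \<in> sets lborel" "emeasure \<nu> A < \<infinity>"
  shows "measure M {\<omega>\<in>space M. point_count P A \<omega> = of_nat k} =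
    exp (- measure \<nu> A) * measure \<nu> A ^ k / fact k"
  using ppp assms by (simp add: poisson_point_process_def)

lemma poisson_point_process_AE_finite:
  assumes "A \<in> sets lborel" "emeasure \<nu> A < \<infinity>"
  shows "AE \<omega> in M. finite (P \<omega> \<inter> A)"
  using poisson_count_AE_nat[OF poisson_point_process_prob_space point_count_measurable[OF assms(1)]
      poisson_point_process_count_distribution[OF assms]]
  by eventually_elim (metis ennreal_of_nat_neq_top point_count_eq_top_iff)

lemma poisson_point_process_AE_infinite:
  assumes "A \<in> sets lborel" "emeasure \<nu> A = \<infinity>"
  shows "AE \<omega> in M. infinite (P \<omega> \<inter> A)"
proof -
  have "AE \<omega> in M. point_count P A \<omega> = \<infinity>"
    using ppp assms by (simp add: poisson_point_process_def)
  then show ?thesis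
    by (simp add: point_count_eq_top_iff)
qed

lemma poisson_point_process_AE_disjoint:
  assumes "A \<in> sets lborel" "emeasure \<nu> A = 0"
  shows "AE \<omega> in M. P \<omega> \<inter> A = {}"
proof -
  interpret prob_space M
    by (rule poisson_point_process_prob_space)
  have "prob {\<omega>\<in>space M. point_count P A \<omega> = of_nat 0} = 1"
    using poisson_point_process_count_distribution[OF assms(1), of 0] assms(2)
    by (simp add: measure_def)
  then have "AE \<omega> in M. point_count P A \<omega> = of_nat 0"
    by (rule AE_prob_1[THEN AE_mp]) simp
  then show ?thesis
    by eventually_elim (simp add: point_count_eq_0_iff)
qed

lemma nn_integral_point_count:
  assumes A: "A \<in> sets lborel"
  shows "(\<integral>\<^sup>+\<omega>. point_count P A \<omega> \<partial>M) = emeasure \<nu> A"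
proof (cases "emeasure \<nu> A = \<infinity>")
  case True
  interpret prob_space M
    by (rule poisson_point_process_prob_space)
  have "AE \<omega> in M. point_count P A \<omega> = \<infinity>"
    using ppp A True by (simp add: poisson_point_process_def)
  then show ?thesis
    using True by (simp add: nn_integral_cong_AE emeasure_space_1)
next
  case False
  then have "emeasure \<nu> A = ennreal (measure \<nu> A)"
    by (simp add: emeasure_eq_ennreal_measure)
  with False show ?thesis
    using nn_integral_poisson_count[OF poisson_point_process_prob_space point_count_measurable[OF A]
        poisson_point_process_count_distribution[OF A]]
    by (simp add: top.not_eq_extremum)
qed

lemma poisson_point_process_AE_weighted_count_finite:
  assumes "\<And>k. A k \<in> sets lborel" "(\<Sum>k. c k * emeasure \<nu> (A k)) < \<infinity>"
  shows "AE \<omega> in M. (\<Sum>k. c k * point_count P (A k) \<omega>) < \<infinity>"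
proof -
  note [measurable] = point_count_measurable[OF assms(1)]
  have "(\<integral>\<^sup>+\<omega>. (\<Sum>k. c k * point_count P (A k) \<omega>) \<partial>M) = (\<Sum>k. c k * emeasure \<nu> (A k))"
    by (simp add: nn_integral_suminf nn_integral_cmult nn_integral_point_count[OF assms(1)])
  then have "AE \<omega> in M. (\<Sum>k. c k * point_count P (A k) \<omega>) \<noteq> \<infinity>"
    using assms(2) by (intro nn_integral_PInf_AE) simp_all
  then show ?thesis
    by (simp add: top.not_eq_extremum)
qed

end

section \<open>Dyadic shells and jump sums\<close>

definition small_shell :: "nat \<Rightarrow> real set" where
  "small_shell k = {(1/2)^Suc k <.. (1/2)^k}"

definition large_shell :: "nat \<Rightarrow> real set" where
  "large_shell k = {2^k <.. 2^Suc k}"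

lemma small_shell_pos: "x \<in> small_shell k \<Longrightarrow> 0 < x"
  using zero_less_power[of "1/2::real" "Suc k"]
  unfolding small_shell_def greaterThanAtMost_iff by linarith

lemma disjoint_family_small_shell: "disjoint_family small_shell"
proof -
  have "small_shell m \<inter> small_shell n = {}" if "m < n" for m n
  proof -
    have "((1::real)/2)^n \<le> (1/2)^Suc m"
      using that by (intro power_decreasing) auto
    then show ?thesis
      by (auto simp: small_shell_def)
  qed
  then show ?thesis
    unfolding disjoint_family_on_def by (metis Int_commute nat_neq_iff)
qed

lemma small_shell_cover:
  assumes "0 < x" "x \<le> 1"
  obtains k where "x \<in> small_shell k"
proof -
  obtain n where "((1::real)/2)^n < x"
    using real_arch_pow_inv[of x "1/2"] assms by auto
  moreover have "((1::real)/2)^Suc n \<le> (1/2)^n"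
    by (intro power_decreasing) auto
  ultimately have "\<exists>m. ((1::real)/2)^Suc m < x"
    by (meson order.strict_trans1)
  define m where "m = (LEAST m. ((1::real)/2)^Suc m < x)"
  have "((1::real)/2)^Suc m < x"
    unfolding m_def using \<open>\<exists>m. _\<close> by (rule LeastI_ex)
  moreover have "x \<le> (1/2)^m"
  proof (cases m)
    case (Suc j)
    then have "\<not> ((1::real)/2)^Suc j < x"
      using not_less_Least[of j "\<lambda>m. ((1::real)/2)^Suc m < x"] by (simp add: m_def)
    with Suc show ?thesis by simp
  qed (use assms in simp)
  ultimately show ?thesis
    using that by (auto simp: small_shell_def)
qed

lemma large_shell_cover:
  assumes "1 < x"
  obtains k where "x \<in> large_shell k"
proof -
  obtain n :: nat where "x < 2^n"
    using real_arch_pow[of 2 x] by auto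
  define m where "m = (LEAST m. x \<le> (2::real)^m)"
  have m: "x \<le> 2^m"
    unfolding m_def by (rule LeastI[of _ n]) (use \<open>x < 2^n\<close> in simp)
  then obtain k where k: "m = Suc k"
    using assms by (cases m) auto
  then have "\<not> x \<le> 2^k"
    using not_less_Least[of k "\<lambda>m. x \<le> (2::real)^m"] by (simp add: m_def)
  with m k show ?thesis
    using that[of k] by (simp add: large_shell_def)
qed

definition jump_sum :: "(real \<times> real) set \<Rightarrow> real \<Rightarrow> ennreal" where
  "jump_sum Q t = (\<Sum>\<^sub>\<infinity>p\<in>{p\<in>Q. fst p \<le> t}. ennreal (snd p))"

lemma multistable_subordinator_eq_jump_sum: "multistable_subordinator P t \<omega> = jump_sum (P \<omega>) t"
  by (simp add: multistable_subordinator_def jump_sum_def)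

lemma jump_sum_mono: "s \<le> t \<Longrightarrow> jump_sum Q s \<le> jump_sum Q t"
  unfolding jump_sum_def by (rule infsum_mono_neutral) (auto intro: nonneg_summable_on_complete)

lemma jump_sum_less:
  assumes "p \<in> Q" "s < fst p" "fst p \<le> t" "0 < snd p" "jump_sum Q s < \<infinity>"
  shows "jump_sum Q s < jump_sum Q t"
proof -
  have "jump_sum Q s < jump_sum Q s + ennreal (snd p)"
    using assms(4,5) ennreal_add_left_cancel_less[of "jump_sum Q s" 0] by (simp add: top.not_eq_extremum)
  also have "\<dots> = (\<Sum>\<^sub>\<infinity>p\<in>insert p {p\<in>Q. fst p \<le> s}. ennreal (snd p))"
    unfolding jump_sum_def using assms(2) by (subst infsum_insert) (auto simp: add.commute intro: nonneg_summable_on_complete)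
  also have "\<dots> \<le> jump_sum Q t"
    unfolding jump_sum_def using assms by (intro infsum_mono_neutral) (auto intro: nonneg_summable_on_complete)
  finally show ?thesis .
qed

lemma infsum_le_nn_integral_count_space:
  fixes f :: "'a \<Rightarrow> ennreal"
  shows "infsum f A \<le> (\<integral>\<^sup>+x. f x \<partial>count_space A)"
proof -
  have "sum f F \<le> (\<integral>\<^sup>+x. f x \<partial>count_space A)" if "finite F" "F \<subseteq> A" for F
  proof -
    have "sum f F = (\<integral>\<^sup>+x. f x \<partial>count_space F)"
      using that by (simp add: nn_integral_count_space_finite)
    also have "\<dots> = (\<integral>\<^sup>+x. f x * indicator F x \<partial>count_space UNIV)"
      by (simp add: nn_integral_count_space_indicator)
    also have "\<dots> \<le> (\<integral>\<^sup>+x. f x * indicator A x \<partial>count_space UNIV)"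
      using that by (intro nn_integral_mono) (auto split: split_indicator)
    finally show ?thesis
      by (simp add: nn_integral_count_space_indicator)
  qed
  then show ?thesis
    by (subst nonneg_infsum_complete) (auto intro!: SUP_least)
qed

lemma jump_weight_le_shell_weights:
  fixes Q :: "(real \<times> real) set"
  assumes "Q \<inter> ({..<0} \<times> UNIV) = {}"
  shows "ennreal (snd p) * indicator {p\<in>Q. fst p \<le> T} p \<le>
    ennreal (snd p) * indicator (Q \<inter> ({0..T} \<times> {1<..})) p +
    (\<Sum>k. ennreal ((1/2)^k) * indicator (Q \<inter> ({0..T} \<times> small_shell k)) p)"
proof (cases "p \<in> Q \<and> fst p \<le> T \<and> 0 < snd p")
  case False
  then have vanish: "ennreal (snd p) * indicator {p\<in>Q. fst p \<le> T} p = 0"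
    by (auto simp: indicator_def ennreal_eq_0_iff)
  show ?thesis
    by (subst vanish) simp
next
  case True
  then have p: "p \<in> Q" "0 \<le> fst p" "fst p \<le> T" "0 < snd p"
    using assms by (cases p; auto simp: not_le)+
  show ?thesis
  proof (cases "1 < snd p")
    case True
    with p have "ennreal (snd p) * indicator {p\<in>Q. fst p \<le> T} p =
        ennreal (snd p) * indicator (Q \<inter> ({0..T} \<times> {1<..})) p"
      by (cases p) simp
    then show ?thesis
      by (simp add: add_increasing2)
  next
    case False
    then obtain k where k: "snd p \<in> small_shell k"
      using small_shell_cover[OF p(4)] by (meson not_less)
    with p have "ennreal (snd p) * indicator {p\<in>Q. fst p \<le> T} p \<le>
        ennreal ((1/2)^k) * indicator (Q \<inter> ({0..T} \<times> small_shell k)) p"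
      by (cases p) (simp add: small_shell_def ennreal_leI)
    also have "\<dots> \<le> (\<Sum>j. ennreal ((1/2)^j) * indicator (Q \<inter> ({0..T} \<times> small_shell j)) p)"
      using sum_le_suminf[OF summableI, of "{k}"] by simp
    finally show ?thesis
      by (simp add: add_increasing)
  qed
qed

lemma jump_sum_less_top:
  fixes Q :: "(real \<times> real) set"
  assumes "Q \<inter> ({..<0} \<times> UNIV) = {}"
    and finite_large: "finite (Q \<inter> ({0..T} \<times> {1<..}))"
    and finite_small: "(\<Sum>k. ennreal ((1/2)^k) *
      emeasure (count_space UNIV) (Q \<inter> ({0..T} \<times> small_shell k))) < \<infinity>"
  shows "jump_sum Q T < \<infinity>"
proof -
  define L where "L = Q \<inter> ({0..T} \<times> {1<..})"
  define S where "S k = Q \<inter> ({0..T} \<times> small_shell k)" for k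
  have "jump_sum Q T \<le> (\<integral>\<^sup>+p. ennreal (snd p) \<partial>count_space {p\<in>Q. fst p \<le> T})"
    unfolding jump_sum_def by (rule infsum_le_nn_integral_count_space)
  also have "\<dots> = (\<integral>\<^sup>+p. ennreal (snd p) * indicator {p\<in>Q. fst p \<le> T} p \<partial>count_space UNIV)"
    by (simp add: nn_integral_count_space_indicator)
  also have "\<dots> \<le> (\<integral>\<^sup>+p. ennreal (snd p) * indicator L p +
      (\<Sum>k. ennreal ((1/2)^k) * indicator (S k) p) \<partial>count_space UNIV)"
    unfolding L_def S_def using assms(1) by (intro nn_integral_mono jump_weight_le_shell_weights)
  also have "\<dots> = (\<Sum>p\<in>L. ennreal (snd p)) + (\<Sum>k. ennreal ((1/2)^k) * emeasure (count_space UNIV) (S k))"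
    using finite_large
    by (simp add: nn_integral_add nn_integral_suminf nn_integral_cmult_indicator
        nn_integral_count_space_indicator[symmetric] nn_integral_count_space_finite L_def)
  also have "\<dots> < \<infinity>"
    using finite_small finite_large by (simp add: S_def L_def less_top ennreal_sum_eq_top)
  finally show ?thesis .
qed

section \<open>The multistable intensity\<close>

lemma emeasure_density_le_const:
  assumes "f \<in> borel_measurable M" "S \<in> sets M" "\<And>x. x \<in> S \<Longrightarrow> f x \<le> C"
  shows "emeasure (density M f) S \<le> C * emeasure M S"
proof -
  have "emeasure (density M f) S \<le> (\<integral>\<^sup>+x. C * indicator S x \<partial>M)"
    using assms by (simp add: emeasure_density) (intro nn_integral_mono; simp split: split_indicator)
  with assms(2) show ?thesis
    by (simp add: nn_integral_cmult_indicator)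
qed

lemma emeasure_density_ge_const:
  assumes "f \<in> borel_measurable M" "S \<in> sets M" "\<And>x. x \<in> S \<Longrightarrow> C \<le> f x"
  shows "C * emeasure M S \<le> emeasure (density M f) S"
proof -
  have "(\<integral>\<^sup>+x. C * indicator S x \<partial>M) \<le> emeasure (density M f) S"
    using assms by (simp add: emeasure_density) (intro nn_integral_mono; simp split: split_indicator)
  with assms(2) show ?thesis
    by (simp add: nn_integral_cmult_indicator)
qed

lemma emeasure_lborel_Times:
  "A \<in> sets borel \<Longrightarrow> B \<in> sets borel \<Longrightarrow>
    emeasure (lborel :: (real \<times> real) measure) (A \<times> B) = emeasure lborel A * emeasure lborel B"
  by (metis lborel.emeasure_pair_measure_Times lborel_prod sets_lborel)

lemma emeasure_lborel_small_shell: "emeasure lborel (small_shell k) = ennreal ((1/2)^Suc k)"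
proof -
  have "((1::real)/2)^Suc k \<le> (1/2)^k"
    by (intro power_decreasing) auto
  then show ?thesis
    by (simp add: small_shell_def)
qed

lemma emeasure_lborel_large_shell: "emeasure lborel (large_shell k) = ennreal (2^k)"
  by (simp add: large_shell_def)

lemma suminf_ennreal_geometric_less_top:
  fixes c r :: real
  assumes "0 \<le> c" "0 \<le> r" "r < 1"
  shows "(\<Sum>k. ennreal (c * r^k)) < \<infinity>"
proof -
  have "summable (\<lambda>k. c * r^k)"
    using assms by (intro summable_mult summable_geometric) auto
  then have "(\<Sum>k. ennreal (c * r^k)) \<noteq> \<top>"
    using assms by (intro ennreal_suminf_neq_top) auto
  then show ?thesis
    by (simp add: less_top)
qed

definition multistable_density :: "(real \<Rightarrow> real) \<Rightarrow> real \<times> real \<Rightarrow> ennreal" where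
  "multistable_density \<beta> =
    (\<lambda>(t, x). if 0 \<le> t \<and> 0 < x then ennreal (\<beta> t * x powr (- \<beta> t - 1)) else 0)"

lemma multistable_intensity_eq_density: "multistable_intensity \<beta> = density lborel (multistable_density \<beta>)"
  by (simp add: multistable_intensity_def multistable_density_def)

lemma sets_multistable_intensity [simp]: "sets (multistable_intensity \<beta>) = sets borel"
  by (simp add: multistable_intensity_eq_density)

lemma multistable_density_measurable:
  assumes "continuous_on {0..} \<beta>"
  shows "multistable_density \<beta> \<in> borel_measurable lborel"
proof -
  define \<beta>' where "\<beta>' t = (if t \<in> {0..} then \<beta> t else 0)" for t :: real
  have [measurable]: "\<beta>' \<in> borel_measurable borel"
    unfolding \<beta>'_def by (rule borel_measurable_continuous_on_if) (use assms in auto)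
  have "multistable_density \<beta> =
      (\<lambda>(t, x). if 0 \<le> t \<and> 0 < x then ennreal (\<beta>' t * x powr (- \<beta>' t - 1)) else 0)"
    by (auto simp: fun_eq_iff multistable_density_def \<beta>'_def)
  also have "\<dots> \<in> borel_measurable (borel \<Otimes>\<^sub>M borel)"
    by measurable
  finally show ?thesis
    by (simp add: borel_prod)
qed

lemma emeasure_multistable_intensity_le:
  assumes "continuous_on {0..} \<beta>" "S \<in> sets borel"
    and "\<And>t x. (t, x) \<in> S \<Longrightarrow> 0 \<le> t \<Longrightarrow> 0 < x \<Longrightarrow> \<beta> t * x powr (- \<beta> t - 1) \<le> C"
  shows "emeasure (multistable_intensity \<beta>) S \<le> ennreal C * emeasure lborel S"
  unfolding multistable_intensity_eq_density using assms
  by (intro emeasure_density_le_const multistable_density_measurable)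
    (auto simp: multistable_density_def ennreal_leI)

lemma emeasure_multistable_intensity_ge:
  assumes "continuous_on {0..} \<beta>" "S \<in> sets borel" "S \<subseteq> {0..} \<times> {0<..}"
    and "\<And>t x. (t, x) \<in> S \<Longrightarrow> C \<le> \<beta> t * x powr (- \<beta> t - 1)"
  shows "ennreal C * emeasure lborel S \<le> emeasure (multistable_intensity \<beta>) S"
  unfolding multistable_intensity_eq_density using assms
  by (intro emeasure_density_ge_const multistable_density_measurable)
    (auto simp: multistable_density_def ennreal_leI)

lemma multistable_index_bounds:
  fixes \<beta> :: "real \<Rightarrow> real"
  assumes "continuous_on {0..} \<beta>" "\<forall>t\<ge>0. 0 < \<beta> t \<and> \<beta> t < 1" "0 \<le> a" "a \<le> b"
  shows "\<exists>lo hi. 0 < lo \<and> hi < 1 \<and> (\<forall>t\<in>{a..b}. lo \<le> \<beta> t \<and> \<beta> t \<le> hi)"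
proof -
  have continuous_ab: "continuous_on {a..b} \<beta>"
    using assms(1) by (rule continuous_on_subset) (use assms(3) in auto)
  obtain t0 where "t0 \<in> {a..b}" "\<forall>t\<in>{a..b}. \<beta> t0 \<le> \<beta> t"
    using continuous_attains_inf[OF compact_Icc _ continuous_ab] assms(4) by auto
  moreover obtain t1 where "t1 \<in> {a..b}" "\<forall>t\<in>{a..b}. \<beta> t \<le> \<beta> t1"
    using continuous_attains_sup[OF compact_Icc _ continuous_ab] assms(4) by auto
  ultimately show ?thesis
    using assms(2,3) by (intro exI[of _ "\<beta> t0"] exI[of _ "\<beta> t1"]) auto
qed

lemma powr_of_power:
  assumes "0 < (y::real)"
  shows "(y^k) powr e = (y powr e)^k"
proof -
  have "(y^k) powr e = (y powr real k) powr e"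
    using assms by (simp add: powr_realpow)
  also have "\<dots> = (y powr e) powr real k"
    by (rule powr_powr_swap)
  also have "\<dots> = (y powr e)^k"
    using assms by (simp add: powr_realpow)
  finally show ?thesis .
qed

lemma small_shell_density_lower:
  assumes "0 \<le> b" "lo \<le> b" "x \<in> small_shell k"
  shows "lo * 2^k \<le> b * x powr (- b - 1)"
proof -
  have x: "0 < x" "x \<le> (1/2)^k"
    using assms(3) small_shell_pos by (auto simp: small_shell_def)
  have "((1::real)/2)^k \<le> 1"
    by (intro power_le_one) auto
  with x have "x powr (-1) \<le> x powr (- b - 1)"
    using assms(1) by (intro powr_mono') auto
  moreover have "x * 2^k \<le> (1/2)^k * 2^k"
    using x(2) by (intro mult_right_mono) auto
  then have "(2::real)^k \<le> x powr (-1)"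
    using x(1) by (simp add: powr_minus_divide field_simps power_mult_distrib[symmetric])
  ultimately have "2^k \<le> x powr (- b - 1)"
    by linarith
  have "lo * 2^k \<le> b * 2^k"
    using assms(2) by (intro mult_right_mono) auto
  also have "\<dots> \<le> b * x powr (- b - 1)"
    using assms(1) \<open>2^k \<le> x powr (- b - 1)\<close> by (intro mult_left_mono)
  finally show ?thesis .
qed

lemma small_shell_density_upper:
  assumes "0 \<le> b" "b \<le> hi" "b \<le> 1" "x \<in> small_shell k"
  shows "b * x powr (- b - 1) \<le> ((1/2)^Suc k) powr (- hi - 1)"
proof -
  have y: "0 < ((1::real)/2)^Suc k" "((1::real)/2)^Suc k \<le> 1" "(1/2)^Suc k < x"
    using assms(4) power_le_one[of "1/2::real" "Suc k"] by (auto simp: small_shell_def simp del: power_Suc)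
  have "b * x powr (- b - 1) \<le> x powr (- b - 1)"
    using assms(1,3) by (simp add: mult_left_le_one_le)
  also have "\<dots> \<le> ((1/2)^Suc k) powr (- b - 1)"
    using assms(1) y by (intro powr_mono2') auto
  also have "\<dots> \<le> ((1/2)^Suc k) powr (- hi - 1)"
    using assms(2) y by (intro powr_mono') auto
  finally show ?thesis .
qed

lemma large_shell_density_upper:
  assumes "0 < lo" "lo \<le> b" "b \<le> 1" "x \<in> large_shell k"
  shows "b * x powr (- b - 1) \<le> (2 powr (- lo))^k / 2^k"
proof -
  have x: "2^k < x"
    using assms(4) by (simp add: large_shell_def)
  moreover have "(1::real) \<le> 2^k"
    by simp
  ultimately have x: "2^k < x" "1 \<le> x"
    by linarith+
  have "b * x powr (- b - 1) \<le> x powr (- b - 1)"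
    using assms(1-3) by (simp add: mult_left_le_one_le)
  also have "\<dots> \<le> x powr (- lo - 1)"
    using assms(2) x(2) by (intro powr_mono) auto
  also have "\<dots> \<le> (2^k) powr (- lo - 1)"
    using assms(1) x(1) by (intro powr_mono2') auto
  also have "\<dots> = ((2::real)^k) powr (- lo) / 2^k"
    by (simp only: powr_diff) simp
  also have "\<dots> = (2 powr (- lo))^k / 2^k"
    by (subst powr_of_power) simp_all
  finally show ?thesis .
qed

context
  fixes \<beta> :: "real \<Rightarrow> real"
  assumes continuous: "continuous_on {0..} \<beta>" and index_range: "\<forall>t\<ge>0. 0 < \<beta> t \<and> \<beta> t < 1"
begin

lemma emeasure_multistable_intensity_negative_times:
  "emeasure (multistable_intensity \<beta>) ({..<0} \<times> UNIV) = 0"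
proof -
  have "{..<0} \<times> UNIV \<in> sets (borel :: (real \<times> real) measure)"
    by (simp add: borel_Times)
  from emeasure_multistable_intensity_le[OF continuous this, of 0] show ?thesis
    by simp
qed

lemma emeasure_multistable_intensity_infinite:
  assumes "0 \<le> q1" "q1 < q2"
  shows "emeasure (multistable_intensity \<beta>) ({q1<..q2} \<times> {0<..}) = \<infinity>"
proof -
  obtain lo hi where lo: "0 < lo" and "hi < 1"
    and bounds: "\<And>t. t \<in> {q1..q2} \<Longrightarrow> lo \<le> \<beta> t \<and> \<beta> t \<le> hi"
    using multistable_index_bounds[OF continuous index_range assms(1) less_imp_le[OF assms(2)]] by blast
  define S where "S k = {q1<..q2} \<times> small_shell k" for k
  have S_sets: "S k \<in> sets borel" for k
    unfolding S_def small_shell_def by (intro borel_Times) auto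
  have shell_mass: "ennreal (lo * (q2 - q1) / 2) \<le> emeasure (multistable_intensity \<beta>) (S k)" for k
  proof -
    have "lo * 2^k \<le> \<beta> t * x powr (- \<beta> t - 1)" if "(t, x) \<in> S k" for t x
    proof (rule small_shell_density_lower)
      show "0 \<le> \<beta> t" "lo \<le> \<beta> t"
        using that assms index_range bounds[of t] by (auto simp: S_def less_imp_le)
    qed (use that in \<open>simp add: S_def\<close>)
    moreover have "S k \<subseteq> {0..} \<times> {0<..}"
      using assms small_shell_pos by (auto simp: S_def)
    ultimately have "ennreal (lo * 2^k) * emeasure lborel (S k) \<le> emeasure (multistable_intensity \<beta>) (S k)"
      by (intro emeasure_multistable_intensity_ge[OF continuous S_sets])
    moreover have "ennreal (lo * (q2 - q1) / 2) = ennreal (lo * 2^k) * emeasure lborel (S k)"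
    proof -
      have "emeasure lborel (S k) = emeasure lborel {q1<..q2} * emeasure lborel (small_shell k)"
        unfolding S_def by (rule emeasure_lborel_Times) (simp_all add: small_shell_def)
      also have "\<dots> = ennreal ((q2 - q1) * (1/2)^Suc k)"
        using assms by (simp add: emeasure_lborel_small_shell ennreal_mult[symmetric] del: power_Suc)
      finally have "emeasure lborel (S k) = ennreal ((q2 - q1) * (1/2)^Suc k)" .
      moreover have "lo * (q2 - q1) / 2 = lo * 2^k * ((q2 - q1) * (1/2)^Suc k)"
        by (simp add: field_simps power_mult_distrib[symmetric])
      ultimately show ?thesis
        using lo(1) assms by (simp only:) (rule ennreal_mult; simp)
    qed
    ultimately show ?thesis
      by simp
  qed
  have "disjoint_family S"
    unfolding disjoint_family_on_def S_def using disjoint_family_onD[OF disjoint_family_small_shell]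
    by blast
  have "\<top> = (\<Sum>k. ennreal (lo * (q2 - q1) / 2))"
    using lo(1) assms by (intro summable_iff_suminf_neq_top[symmetric]) (auto simp: summable_const_iff)
  also have "\<dots> \<le> (\<Sum>k. emeasure (multistable_intensity \<beta>) (S k))"
    by (intro suminf_le shell_mass summableI)
  also have "\<dots> = emeasure (multistable_intensity \<beta>) (\<Union>k. S k)"
    using S_sets \<open>disjoint_family S\<close> by (intro suminf_emeasure) auto
  also have "\<dots> \<le> emeasure (multistable_intensity \<beta>) ({q1<..q2} \<times> {0<..})"
  proof (rule emeasure_mono)
    show "(\<Union>k. S k) \<subseteq> {q1<..q2} \<times> {0<..}"
      unfolding S_def using small_shell_pos by blast
  qed (simp add: borel_Times)
  finally show ?thesis
    by (simp add: top_unique)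
qed

lemma emeasure_multistable_intensity_large_jumps:
  assumes "0 \<le> T"
  shows "emeasure (multistable_intensity \<beta>) ({0..T} \<times> {1<..}) < \<infinity>"
proof -
  obtain lo hi where lo: "0 < lo" and "hi < 1"
    and bounds: "\<And>t. t \<in> {0..T} \<Longrightarrow> lo \<le> \<beta> t \<and> \<beta> t \<le> hi"
    using multistable_index_bounds[OF continuous index_range order_refl assms] by blast
  define R where "R k = {0..T} \<times> large_shell k" for k
  have R_sets: "R k \<in> sets borel" for k
    unfolding R_def large_shell_def by (intro borel_Times) auto
  have shell_mass: "emeasure (multistable_intensity \<beta>) (R k) \<le> ennreal (T * (2 powr (- lo))^k)" for k
  proof -
    have "\<beta> t * x powr (- \<beta> t - 1) \<le> (2 powr (- lo))^k / 2^k" if "(t, x) \<in> R k" "0 \<le> t" for t x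
    proof (rule large_shell_density_upper)
      show "lo \<le> \<beta> t" "\<beta> t \<le> 1"
        using that index_range bounds[of t] by (auto simp: R_def less_imp_le)
    qed (use that lo(1) in \<open>simp_all add: R_def\<close>)
    then have "emeasure (multistable_intensity \<beta>) (R k) \<le> ennreal ((2 powr (- lo))^k / 2^k) * emeasure lborel (R k)"
      by (intro emeasure_multistable_intensity_le[OF continuous R_sets])
    also have "emeasure lborel (R k) = ennreal (T * 2^k)"
    proof -
      have "emeasure lborel (R k) = emeasure lborel {0..T} * emeasure lborel (large_shell k)"
        unfolding R_def by (rule emeasure_lborel_Times) (simp_all add: large_shell_def)
      with assms show ?thesis
        by (simp add: emeasure_lborel_large_shell ennreal_mult)
    qed
    finally show ?thesis
      using assms by (simp add: ennreal_mult[symmetric] mult.commute)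
  qed
  have "{0..T} \<times> {1<..} \<subseteq> (\<Union>k. R k)"
  proof
    fix p :: "real \<times> real"
    assume p: "p \<in> {0..T} \<times> {1<..}"
    then have "1 < snd p"
      by auto
    then obtain k where "snd p \<in> large_shell k"
      by (rule large_shell_cover)
    with p show "p \<in> (\<Union>k. R k)"
      by (auto simp: R_def mem_Times_iff)
  qed
  then have "emeasure (multistable_intensity \<beta>) ({0..T} \<times> {1<..}) \<le>
      emeasure (multistable_intensity \<beta>) (\<Union>k. R k)"
    using R_sets by (intro emeasure_mono) auto
  also have "\<dots> \<le> (\<Sum>k. emeasure (multistable_intensity \<beta>) (R k))"
    using R_sets by (intro emeasure_subadditive_countably) auto
  also have "\<dots> \<le> (\<Sum>k. ennreal (T * (2 powr (- lo))^k))"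
    by (intro suminf_le shell_mass summableI)
  also have "\<dots> < \<infinity>"
    using assms lo(1) by (intro suminf_ennreal_geometric_less_top) (auto intro: powr_less_one)
  finally show ?thesis .
qed

lemma multistable_intensity_small_jump_mass:
  assumes "0 \<le> T"
  shows "(\<Sum>k. ennreal ((1/2)^k) * emeasure (multistable_intensity \<beta>) ({0..T} \<times> small_shell k)) < \<infinity>"
proof -
  obtain lo hi where "0 < lo" and hi: "hi < 1"
    and bounds: "\<And>t. t \<in> {0..T} \<Longrightarrow> lo \<le> \<beta> t \<and> \<beta> t \<le> hi"
    using multistable_index_bounds[OF continuous index_range order_refl assms] by blast
  define r where "r = ((1::real)/2) powr (1 - hi)"
  have r: "0 \<le> r" "r < 1"
    using hi powr_less_mono2[of "1 - hi" "1/2" 1] by (auto simp: r_def)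
  define S where "S k = {0..T} \<times> small_shell k" for k
  have S_sets: "S k \<in> sets borel" for k
    unfolding S_def small_shell_def by (intro borel_Times) auto
  have shell_mass: "ennreal ((1/2)^k) * emeasure (multistable_intensity \<beta>) (S k) \<le> ennreal (2 * T * r * r^k)" for k
  proof -
    define y :: real where "y = (1/2)^Suc k"
    have y: "0 < y"
      by (simp add: y_def)
    have "\<beta> t * x powr (- \<beta> t - 1) \<le> y powr (- hi - 1)" if "(t, x) \<in> S k" "0 \<le> t" for t x
      unfolding y_def
    proof (rule small_shell_density_upper)
      show "0 \<le> \<beta> t" "\<beta> t \<le> hi" "\<beta> t \<le> 1"
        using that index_range bounds[of t] by (auto simp: S_def less_imp_le)
    qed (use that in \<open>simp add: S_def\<close>)
    then have "emeasure (multistable_intensity \<beta>) (S k) \<le> ennreal (y powr (- hi - 1)) * emeasure lborel (S k)"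
      by (intro emeasure_multistable_intensity_le[OF continuous S_sets])
    also have "emeasure lborel (S k) = emeasure lborel {0..T} * emeasure lborel (small_shell k)"
      unfolding S_def by (rule emeasure_lborel_Times) (simp_all add: small_shell_def)
    also have "\<dots> = ennreal (T * y)"
      using assms by (simp add: emeasure_lborel_small_shell ennreal_mult y_def del: power_Suc)
    finally have "ennreal ((1/2)^k) * emeasure (multistable_intensity \<beta>) (S k) \<le>
        ennreal ((1/2)^k * (y powr (- hi - 1) * (T * y)))"
      using assms y by (simp add: ennreal_mult mult_left_mono)
    also have "(1/2)^k * (y powr (- hi - 1) * (T * y)) = 2 * T * (y powr 1 * y powr 1 * y powr (- hi - 1))"
      using y by (simp add: y_def)
    also have "y powr 1 * y powr 1 * y powr (- hi - 1) = y powr (1 - hi)"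
      by (simp only: powr_add[symmetric]) simp
    also have "y powr (1 - hi) = r * r^k"
      unfolding y_def r_def by (subst powr_of_power) simp_all
    finally show ?thesis
      by (simp add: mult.assoc)
  qed
  have "(\<Sum>k. ennreal ((1/2)^k) * emeasure (multistable_intensity \<beta>) (S k)) \<le>
      (\<Sum>k. ennreal (2 * T * r * r^k))"
    by (intro suminf_le shell_mass summableI)
  also have "\<dots> < \<infinity>"
    using assms r by (intro suminf_ennreal_geometric_less_top) auto
  finally show ?thesis
    by (simp add: S_def)
qed

end

section \<open>Sample paths\<close>

context
  fixes \<beta> :: "real \<Rightarrow> real" and M :: "'w measure" and P :: "'w \<Rightarrow> (real \<times> real) set"
  assumes continuous: "continuous_on {0..} \<beta>" and index_range: "\<forall>t\<ge>0. 0 < \<beta> t \<and> \<beta> t < 1"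
    and ppp: "poisson_point_process M (multistable_intensity \<beta>) P"
begin

lemma multistable_AE_jump_in_every_interval:
  "AE \<omega> in M. \<forall>r s. 0 \<le> r \<longrightarrow> r < s \<longrightarrow> (\<exists>p\<in>P \<omega>. r < fst p \<and> fst p \<le> s \<and> 0 < snd p)"
proof -
  define I where "I = {q :: real \<times> real. q \<in> \<rat> \<times> \<rat> \<and> 0 \<le> fst q \<and> fst q < snd q}"
  have "countable I"
    by (rule countable_subset[of _ "\<rat> \<times> \<rat>"]) (auto simp: I_def countable_rat)
  moreover have "AE \<omega> in M. P \<omega> \<inter> ({fst q<..snd q} \<times> {0<..}) \<noteq> {}" if "q \<in> I" for q
  proof -
    have "AE \<omega> in M. infinite (P \<omega> \<inter> ({fst q<..snd q} \<times> {0<..}))"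
      using that by (intro poisson_point_process_AE_infinite[OF ppp]
          emeasure_multistable_intensity_infinite[OF continuous index_range]) (auto simp: I_def borel_Times)
    then show ?thesis
      by eventually_elim auto
  qed
  ultimately have "AE \<omega> in M. \<forall>q\<in>I. P \<omega> \<inter> ({fst q<..snd q} \<times> {0<..}) \<noteq> {}"
    by (simp add: AE_ball_countable)
  then show ?thesis
  proof eventually_elim
    case (elim \<omega>)
    show ?case
    proof (intro allI impI)
      fix r s :: real
      assume "0 \<le> r" "r < s"
      then obtain q1 q2 where "q1 \<in> \<rat>" "q2 \<in> \<rat>" "r < q1" "q1 < q2" "q2 < s"
        by (metis Rats_dense_in_real order.strict_trans)
      with \<open>0 \<le> r\<close> have "(q1, q2) \<in> I"
        by (simp add: I_def)
      with elim obtain p where "p \<in> P \<omega>" "q1 < fst p" "fst p \<le> q2" "0 < snd p"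
        by (fastforce simp: mem_Times_iff)
      with \<open>r < q1\<close> \<open>q2 < s\<close> show "\<exists>p\<in>P \<omega>. r < fst p \<and> fst p \<le> s \<and> 0 < snd p"
        by force
    qed
  qed
qed

lemma multistable_AE_jump_sum_finite_at:
  assumes "0 \<le> T"
  shows "AE \<omega> in M. jump_sum (P \<omega>) T < \<infinity>"
proof -
  have "AE \<omega> in M. P \<omega> \<inter> ({..<0} \<times> UNIV) = {}"
    by (intro poisson_point_process_AE_disjoint[OF ppp]
        emeasure_multistable_intensity_negative_times[OF continuous index_range])
      (simp add: borel_Times)
  moreover have "AE \<omega> in M. finite (P \<omega> \<inter> ({0..T} \<times> {1<..}))"
    by (intro poisson_point_process_AE_finite[OF ppp]
        emeasure_multistable_intensity_large_jumps[OF continuous index_range assms])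
      (simp add: borel_Times)
  moreover have "AE \<omega> in M. (\<Sum>k. ennreal ((1/2)^k) * point_count P ({0..T} \<times> small_shell k) \<omega>) < \<infinity>"
    by (intro poisson_point_process_AE_weighted_count_finite[OF ppp]
        multistable_intensity_small_jump_mass[OF continuous index_range assms])
      (simp add: borel_Times small_shell_def)
  ultimately show ?thesis
    by eventually_elim (intro jump_sum_less_top; simp add: point_count_def)
qed

lemma multistable_AE_jump_sum_finite: "AE \<omega> in M. \<forall>t. jump_sum (P \<omega>) t < \<infinity>"
proof -
  have "AE \<omega> in M. \<forall>n::nat. jump_sum (P \<omega>) (real n) < \<infinity>"
    by (subst AE_all_countable) (intro allI multistable_AE_jump_sum_finite_at; simp)
  then show ?thesis
    by eventually_elim (meson jump_sum_mono order.strict_trans1 real_nat_ceiling_ge)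
qed

end

theorem mainTheorem3:
  fixes \<beta> :: "real \<Rightarrow> real" and M :: "'w measure" and P :: "'w \<Rightarrow> (real \<times> real) set"
  assumes "continuous_on {0..} \<beta>"
    and "\<forall>t\<ge>0. 0 < \<beta> t \<and> \<beta> t < 1"
    and "poisson_point_process M (multistable_intensity \<beta>) P"
  shows "AE \<omega> in M. strict_mono_on {0..} (\<lambda>t. multistable_subordinator P t \<omega>)"
  using multistable_AE_jump_in_every_interval[OF assms] multistable_AE_jump_sum_finite[OF assms]
proof eventually_elim
  case (elim \<omega>)
  show ?case
    unfolding strict_mono_on_def multistable_subordinator_eq_jump_sum
  proof (intro allI impI)
    fix r s :: real
    assume "r \<in> {0..} \<and> s \<in> {0..} \<and> r < s"
    with elim(1) have "\<exists>p\<in>P \<omega>. r < fst p \<and> fst p \<le> s \<and> 0 < snd p"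
      by simp
    then obtain p where "p \<in> P \<omega>" "r < fst p" "fst p \<le> s" "0 < snd p"
      by blast
    with elim(2) show "jump_sum (P \<omega>) r < jump_sum (P \<omega>) s"
      by (intro jump_sum_less) auto
  qed
qed

end
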